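(* Let $v\in\mathbb R$, $c\in\mathcal M_v$, $L\in\Gamma_{(d,d-1)}$, and $z=\exp(iL)c$. Then: (i) there exist $M\in\mathcal C_+$ and $c'\in X_d$, arbitrarily close to $L$ and $c$ respectively, such that $z=\exp(iL)c=\exp(iM)c'$; (ii) for every neighborhood $W$ of $(L,c)$ in $\mathcal G\times X_d$ there is a neighborhood $V$ of $z$ in $X_d^{(c)}$ such that every $z''\in V$ can be written as $z''=\exp(iM'')c''$ with $M''\in\mathcal C_+$ and $(M'',c'')\in W$.
   Context: Let $d\ge2$. $E_{d+1}=\mathbb R^{d+1}$, $E^{(c)}_{d+1}=\mathbb C^{d+1}$ with bilinear form $(x,y)=x^0y^0+x^dy^d-\sum_{j=1}^{d-1}x^jy^j$, canonical basis $e_0,\dots,e_d$. $X_d=\{x\in E_{d+1}:(x,x)=1\}$, $X_d^{(c)}=\{z\in E^{(c)}_{d+1}:(z,z)=1\}$. $G_0$ is the identity component of the group of real linear maps preserving the form, $\mathcal G$ its Lie algebra (real linear maps $A$ with $(Ax,y)=-(x,Ay)$); $\exp$ is the matrix exponential. $\ell(a\wedge b)x=a(b,x)-b(a,x)$. $\mathcal C_1=\{\ell(a\wedge b):(a,a)=(b,b)=1,(a,b)=0,a^0b^d-a^db^0>0\}$, $\mathcal C_+=\bigcup_{\rho>0}\rho\,\mathcal C_1$. $\mathcal M_v=\{x\in X_d:x^{d-1}+x^d=e^v\}$. $L_\mu=\ell(e_\mu\wedge(e_d-e_{d-1}))$ for $0\le\mu\le d-2$, and $\Gamma_{(d,d-1)}=\{\sum_{\mu=0}^{d-2}b^\mu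 L_\mu: b^0>(\sum_{j=1}^{d-2}(b^j)^2)^{1/2}\}$. *)

theory Defs
  imports "HOL-Analysis.Analysis"
begin

text \<open>Vectors of E_{d+1} (resp. its complexification) are functions nat => 'a
  vanishing outside the index range 0..d; linear maps are (d+1)x(d+1) matrices
  given as nat => nat => 'a, vanishing outside {0..d} x {0..d}.\<close>

definition vecs :: "nat \<Rightarrow> (nat \<Rightarrow> 'a::zero) set" where
  "vecs d = {x. \<forall>j>d. x j = 0}"

definition mats :: "nat \<Rightarrow> (nat \<Rightarrow> nat \<Rightarrow> 'a::zero) set" where
  "mats d = {A. \<forall>i j. (d < i \<or> d < j) \<longrightarrow> A i j = 0}"

definition unitv :: "nat \<Rightarrow> nat \<Rightarrow> 'a::{zero,one}" where
  "unitv k = (\<lambda>j. if j = k then 1 else 0)"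

definition form :: "nat \<Rightarrow> (nat \<Rightarrow> 'a::comm_ring_1) \<Rightarrow> (nat \<Rightarrow> 'a) \<Rightarrow> 'a" where
  "form d x y = x 0 * y 0 + x d * y d - (\<Sum>j\<in>{1..d-1}. x j * y j)"

definition Xd :: "nat \<Rightarrow> (nat \<Rightarrow> real) set" where
  "Xd d = {x \<in> vecs d. form d x x = 1}"

definition Xdc :: "nat \<Rightarrow> (nat \<Rightarrow> complex) set" where
  "Xdc d = {z \<in> vecs d. form d z z = 1}"

definition mapply :: "nat \<Rightarrow> (nat \<Rightarrow> nat \<Rightarrow> 'a::comm_ring_1) \<Rightarrow> (nat \<Rightarrow> 'a) \<Rightarrow> nat \<Rightarrow> 'a" where
  "mapply d A x = (\<lambda>i. if i \<le> d then (\<Sum>j\<le>d. A i j * x j) else 0)"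

definition mmult :: "nat \<Rightarrow> (nat \<Rightarrow> nat \<Rightarrow> 'a::comm_ring_1) \<Rightarrow> (nat \<Rightarrow> nat \<Rightarrow> 'a) \<Rightarrow> nat \<Rightarrow> nat \<Rightarrow> 'a" where
  "mmult d A B = (\<lambda>i j. if i \<le> d \<and> j \<le> d then (\<Sum>k\<le>d. A i k * B k j) else 0)"

definition mone :: "nat \<Rightarrow> nat \<Rightarrow> nat \<Rightarrow> 'a::comm_ring_1" where
  "mone d = (\<lambda>i j. if i = j \<and> i \<le> d then 1 else 0)"

primrec mpow :: "nat \<Rightarrow> (nat \<Rightarrow> nat \<Rightarrow> 'a::comm_ring_1) \<Rightarrow> nat \<Rightarrow> nat \<Rightarrow> nat \<Rightarrow> 'a" where
  "mpow d A 0 = mone d"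
| "mpow d A (Suc n) = mmult d A (mpow d A n)"

definition mexp :: "nat \<Rightarrow> (nat \<Rightarrow> nat \<Rightarrow> complex) \<Rightarrow> nat \<Rightarrow> nat \<Rightarrow> complex" where
  "mexp d A = (\<lambda>i j. (\<Sum>n. mpow d A n i j / of_nat (fact n)))"

definition expi_apply :: "nat \<Rightarrow> (nat \<Rightarrow> nat \<Rightarrow> real) \<Rightarrow> (nat \<Rightarrow> real) \<Rightarrow> nat \<Rightarrow> complex" where
  "expi_apply d L c = mapply d (mexp d (\<lambda>i j. \<i> * complex_of_real (L i j))) (\<lambda>j. complex_of_real (c j))"

definition LieG :: "nat \<Rightarrow> (nat \<Rightarrow> nat \<Rightarrow> real) set" where
  "LieG d = {A \<in> mats d. \<forall>x\<in>vecs d. \<forall>y\<in>vecs d. form d (mapply d A x) y = - form d x (mapply d A y)}"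

text \<open>Matrix of l(a /\ b): x |-> a (b,x) - b (a,x).\<close>
definition ell :: "nat \<Rightarrow> (nat \<Rightarrow> real) \<Rightarrow> (nat \<Rightarrow> real) \<Rightarrow> nat \<Rightarrow> nat \<Rightarrow> real" where
  "ell d a b = (\<lambda>i j. if i \<le> d \<and> j \<le> d then a i * form d b (unitv j) - b i * form d a (unitv j) else 0)"

definition C1 :: "nat \<Rightarrow> (nat \<Rightarrow> nat \<Rightarrow> real) set" where
  "C1 d = {ell d a b | a b. a \<in> vecs d \<and> b \<in> vecs d \<and> form d a a = 1 \<and> form d b b = 1
            \<and> form d a b = 0 \<and> a 0 * b d - a d * b 0 > 0}"

definition Cplus :: "nat \<Rightarrow> (nat \<Rightarrow> nat \<Rightarrow> real) set" where
  "Cplus d = {(\<lambda>i j. \<rho> * M i j) | \<rho> M. \<rho> > 0 \<and> M \<in> C1 d}"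

definition Mv :: "nat \<Rightarrow> real \<Rightarrow> (nat \<Rightarrow> real) set" where
  "Mv d v = {x \<in> Xd d. x (d-1) + x d = exp v}"

definition Lmu :: "nat \<Rightarrow> nat \<Rightarrow> nat \<Rightarrow> nat \<Rightarrow> real" where
  "Lmu d \<mu> = ell d (unitv \<mu>) (\<lambda>j. unitv d j - unitv (d-1) j)"

definition Gamma_dd1 :: "nat \<Rightarrow> (nat \<Rightarrow> nat \<Rightarrow> real) set" where
  "Gamma_dd1 d = {(\<lambda>i j. \<Sum>\<mu>\<in>{0..d-2}. b \<mu> * Lmu d \<mu> i j) | b.
                   b 0 > sqrt (\<Sum>j\<in>{1..d-2}. (b j)^2)}"

definition vdist :: "nat \<Rightarrow> (nat \<Rightarrow> 'a::real_normed_vector) \<Rightarrow> (nat \<Rightarrow> 'a) \<Rightarrow> real" where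
  "vdist d x y = sqrt (\<Sum>i\<le>d. (norm (x i - y i))^2)"

definition matdist :: "nat \<Rightarrow> (nat \<Rightarrow> nat \<Rightarrow> real) \<Rightarrow> (nat \<Rightarrow> nat \<Rightarrow> real) \<Rightarrow> real" where
  "matdist d A B = sqrt (\<Sum>i\<le>d. \<Sum>j\<le>d. (A i j - B i j)^2)"

end

theory Submission
  imports Defs "HOL-Real_Asymp.Real_Asymp"
begin

(* L = ell(beta, n) is a null rotation: n = e_d - e_(d-1) is null and orthogonal to beta, so the
   exponential series of iL stops after the quadratic term and z = exp(iL) c = x + iy is explicit,
   with (x,y) = 0 and (y,y) > 0.
   Conversely, given x + iy in X_d^(c) with (y,y) > 0 and an auxiliary vector p in suitable position,
   x + iy = exp(i rho ell(a, b)) c', where a, b is the orthonormal basis of the plane spanned by y and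
   p, tanh rho = sqrt(Gram(y,p)) / (x,p), and c' is x corrected along the part of p orthogonal to y;
   the generator rho ell(a, b) lies in C_+ and (rho ell(a, b), c') depends continuously on (p, x, y).
   Tilting p = n + s e_d, this pair tends to (L, c) as s -> 0+ because artanh t / t -> 1; for a fixed
   small s, continuity in x + iy gives (ii), and (i) is the case z'' = z. *)

definition form_sign :: "nat \<Rightarrow> nat \<Rightarrow> 'a::comm_ring_1" where
  "form_sign d k = (if k = 0 \<or> k = d then 1 else -1)"

lemma form_diagonal:
  assumes "1 \<le> d"
  shows "form d x y = (\<Sum>k\<le>d. form_sign d k * x k * y k)"
proof -
  have "{..d} = insert 0 (insert d {1..d-1})" using assms by auto
  moreover have "(\<Sum>k\<in>{1..d-1}. form_sign d k * x k * y k) = - (\<Sum>k\<in>{1..d-1}. x k * y k)"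
    by (simp add: sum_negf[symmetric], intro sum.cong) (auto simp: form_sign_def)
  ultimately show ?thesis using assms by (simp add: form_def form_sign_def)
qed

lemma form_unitv_right:
  "1 \<le> d \<Longrightarrow> form d x (unitv k) = (if k \<le> d then form_sign d k * x k else 0)"
  by (auto simp: form_diagonal unitv_def if_distrib cong: if_cong)

lemma sum_form_unitv:
  assumes "1 \<le> d"
  shows "(\<Sum>k\<le>d. form d a (unitv k) * c k) = form d a c"
proof -
  have "(\<Sum>k\<le>d. form d a (unitv k) * c k) = (\<Sum>k\<le>d. form_sign d k * a k * c k)"
    using assms by (intro sum.cong) (auto simp: form_unitv_right)
  then show ?thesis using assms by (simp add: form_diagonal)
qed

lemma form_commute: "form d x y = form d y x"
  by (simp add: form_def mult.commute)

lemma form_cong: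
  assumes "\<And>k. k \<le> d \<Longrightarrow> u k = u' k" "\<And>k. k \<le> d \<Longrightarrow> w k = w' k"
  shows "form d u w = form d u' w'"
  using assms unfolding form_def by (auto intro!: sum.cong)

lemma form_add_left [simp]: "form d (\<lambda>k. u k + v k) w = form d u w + form d v w"
  by (simp add: form_def sum.distrib algebra_simps)
lemma form_add_right [simp]: "form d w (\<lambda>k. u k + v k) = form d w u + form d w v"
  by (simp add: form_def sum.distrib algebra_simps)
lemma form_diff_left [simp]: "form d (\<lambda>k. u k - v k) w = form d u w - form d v w"
  by (simp add: form_def sum_subtractf algebra_simps)
lemma form_diff_right [simp]: "form d w (\<lambda>k. u k - v k) = form d w u - form d w v"
  by (simp add: form_def sum_subtractf algebra_simps)
lemma form_minus_left [simp]: "form d (\<lambda>k. - u k) w = - form d u w"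
  by (simp add: form_def sum_negf algebra_simps)
lemma form_minus_right [simp]: "form d w (\<lambda>k. - u k) = - form d w u"
  by (simp add: form_def sum_negf algebra_simps)
lemma form_scale_left [simp]: "form d (\<lambda>k. r * u k) w = r * form d u w"
  by (simp add: form_def sum_distrib_left algebra_simps)
lemma form_scale_right [simp]: "form d w (\<lambda>k. r * u k) = r * form d w u"
  by (simp add: form_def sum_distrib_left algebra_simps)
lemma form_scale_left' [simp]: "form d (\<lambda>k. u k * r) w = form d u w * r"
  by (simp add: form_def sum_distrib_right algebra_simps)
lemma form_scale_right' [simp]: "form d w (\<lambda>k. u k * r) = form d w u * r"
  by (simp add: form_def sum_distrib_right algebra_simps)
lemma form_divide_left [simp]: "form d (\<lambda>k. u k / r) w = form d u w / (r::real)"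
  using form_scale_left[of d "1/r" u w] by simp
lemma form_divide_right [simp]: "form d w (\<lambda>k. u k / r) = form d w u / (r::real)"
  using form_scale_right[of d w "1/r" u] by simp

lemma form_sum_left: "form d (\<lambda>k. \<Sum>\<mu>\<in>A. g \<mu> k) w = (\<Sum>\<mu>\<in>A. form d (g \<mu>) w)"
  by (simp add: form_def sum_subtractf sum.distrib sum_distrib_right sum.swap[of _ "{Suc 0..d - Suc 0}"])

lemma form_of_real [simp]:
  "form d (\<lambda>k. complex_of_real (u k)) (\<lambda>k. complex_of_real (w k)) = complex_of_real (form d u w)"
  by (simp add: form_def)

lemma form_complex_self:
  "form d (\<lambda>k. complex_of_real (x k) + \<i> * complex_of_real (y k))
          (\<lambda>k. complex_of_real (x k) + \<i> * complex_of_real (y k))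
   = complex_of_real (form d x x - form d y y) + \<i> * complex_of_real (2 * form d x y)"
  by (simp add: form_commute[of d y x] algebra_simps)

definition normalized :: "nat \<Rightarrow> (nat \<Rightarrow> real) \<Rightarrow> nat \<Rightarrow> real" where
  "normalized d u = (\<lambda>k. u k / sqrt (form d u u))"

lemma form_normalized: "0 < form d u u \<Longrightarrow> form d (normalized d u) (normalized d u) = 1"
  by (simp add: normalized_def)

definition outer :: "nat \<Rightarrow> (nat \<Rightarrow> real) \<Rightarrow> nat \<Rightarrow> nat \<Rightarrow> real" where
  "outer d u = (\<lambda>i j. if i \<le> d \<and> j \<le> d then u i * form d u (unitv j) else 0)"

lemma outer_mult_sum:
  "1 \<le> d \<Longrightarrow> i \<le> d \<Longrightarrow> (\<Sum>k\<le>d. outer d u i k * c k) = u i * form d u c"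
  by (simp add: outer_def mult.assoc sum_distrib_left[symmetric] sum_form_unitv)

lemma ell_mult_sum:
  assumes "1 \<le> d" "i \<le> d"
  shows "(\<Sum>k\<le>d. ell d a b i k * c k) = a i * form d b c - b i * form d a c"
proof -
  have "(\<Sum>k\<le>d. ell d a b i k * c k)
      = (\<Sum>k\<le>d. a i * (form d b (unitv k) * c k) - b i * (form d a (unitv k) * c k))"
    using assms by (intro sum.cong) (auto simp: ell_def algebra_simps)
  then show ?thesis
    using assms by (simp add: sum_subtractf sum_distrib_left[symmetric] sum_form_unitv)
qed

lemma ell_eq_wedge:
  "1 \<le> d \<Longrightarrow> i \<le> d \<Longrightarrow> j \<le> d \<Longrightarrow> ell d a b i j = form_sign d j * (a i * b j - a j * b i)"
  by (simp add: ell_def form_unitv_right algebra_simps)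

lemma ell_column: "k \<le> d \<Longrightarrow> j \<le> d \<Longrightarrow> ell d a b k j = form d b (unitv j) * a k - form d a (unitv j) * b k"
  by (simp add: ell_def mult.commute)

lemma ell_mult_ell:
  assumes "1 \<le> d" "i \<le> d" "j \<le> d"
  shows "(\<Sum>k\<le>d. ell d a b i k * ell d a b k j) =
     a i * (form d b a * form d b (unitv j) - form d b b * form d a (unitv j))
   - b i * (form d a a * form d b (unitv j) - form d a b * form d a (unitv j))"
proof -
  have col: "form d w (\<lambda>k. ell d a b k j) = form d w (\<lambda>k. form d b (unitv j) * a k - form d a (unitv j) * b k)" for w
    using assms by (intro form_cong) (auto simp: ell_column)
  show ?thesis
    unfolding ell_mult_sum[OF assms(1,2)] col by (simp add: algebra_simps)
qed

lemma ell_mult_outer: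
  assumes "1 \<le> d" "i \<le> d" "j \<le> d"
  shows "(\<Sum>k\<le>d. ell d a b i k * outer d u k j) = (a i * form d b u - b i * form d a u) * form d u (unitv j)"
proof -
  have col: "form d w (\<lambda>k. outer d u k j) = form d w u * form d u (unitv j)" for w
    using assms by (subst form_cong[of d w w _ "\<lambda>k. u k * form d u (unitv j)"]) (auto simp: outer_def)
  show ?thesis
    unfolding ell_mult_sum[OF assms(1,2)] col by (simp add: algebra_simps)
qed

lemma ell_sum_left:
  "ell d (\<lambda>k. \<Sum>\<mu>\<in>A. f \<mu> * u \<mu> k) w i j = (\<Sum>\<mu>\<in>A. f \<mu> * ell d (u \<mu>) w i j)"
  by (auto simp: ell_def form_sum_left sum_distrib_left sum_distrib_right sum_subtractf[symmetric] algebra_simps)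

lemma mult_mone_right: "j \<le> d \<Longrightarrow> (\<Sum>k\<le>d. A k * mone d k j) = A j"
  by (simp add: mone_def if_distrib cong: if_cong)

lemma of_real_mone [simp]: "of_real (mone d i j) = mone d i j"
  by (simp add: mone_def)

lemma mone_mult_sum:
  assumes "i \<le> d"
  shows "(\<Sum>k\<le>d. mone d i k * c k) = c i"
proof -
  have "(\<Sum>k\<le>d. mone d i k * c k) = (\<Sum>k\<le>d. if k = i then c k else 0)"
    by (intro sum.cong) (auto simp: mone_def)
  then show ?thesis using assms by simp
qed

lemma mpow_eqI:
  assumes "B 0 = mone d" and "\<And>n. B n \<in> mats d"
    and "\<And>n i j. i \<le> d \<Longrightarrow> j \<le> d \<Longrightarrow> (\<Sum>k\<le>d. A i k * B n k j) = B (Suc n) i j"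
  shows "mpow d A n = B n"
proof (induction n)
  case 0
  then show ?case using assms(1) by simp
next
  case (Suc n)
  show ?case
    using assms(2)[of "Suc n"] by (intro ext) (auto simp: Suc.IH mmult_def assms(3) mats_def)
qed

lemma expi_apply_from_mexp:
  assumes "\<And>j. j \<le> d \<Longrightarrow> mexp d (\<lambda>i j. \<i> * complex_of_real (L i j)) i j
             = complex_of_real (mone d i j + R j) + \<i> * complex_of_real (I j)"
    and "i \<le> d"
  shows "expi_apply d L c i
    = complex_of_real (c i + (\<Sum>j\<le>d. R j * c j)) + \<i> * complex_of_real (\<Sum>j\<le>d. I j * c j)"
proof -
  have "expi_apply d L c i = (\<Sum>j\<le>d. (complex_of_real (mone d i j + R j) + \<i> * complex_of_real (I j)) * c j)"
    using assms by (simp add: expi_apply_def mapply_def)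
  also have "\<dots> = complex_of_real (\<Sum>j\<le>d. mone d i j * c j + R j * c j) + \<i> * complex_of_real (\<Sum>j\<le>d. I j * c j)"
    by (simp add: algebra_simps sum.distrib sum_distrib_left)
  finally show ?thesis
    using assms(2) by (simp add: sum.distrib mone_mult_sum)
qed

locale orthonormal_pair =
  fixes d :: nat and a b :: "nat \<Rightarrow> real"
  assumes d_pos: "1 \<le> d"
    and a_unit: "form d a a = 1" and b_unit: "form d b b = 1" and a_b_orth: "form d a b = 0"
begin

abbreviation "proj \<equiv> \<lambda>i j. outer d a i j + outer d b i j"

lemma ell_mult_ell_eq: "i \<le> d \<Longrightarrow> j \<le> d \<Longrightarrow> (\<Sum>k\<le>d. ell d a b i k * ell d a b k j) = - proj i j"
  using ell_mult_ell[OF d_pos, of i j a b] a_unit b_unit a_b_orth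
  by (simp add: form_commute[of d b a] outer_def)

lemma ell_mult_proj:
  assumes "i \<le> d" "j \<le> d"
  shows "(\<Sum>k\<le>d. ell d a b i k * proj k j) = ell d a b i j"
proof -
  have "(\<Sum>k\<le>d. ell d a b i k * proj k j)
      = (\<Sum>k\<le>d. ell d a b i k * outer d a k j) + (\<Sum>k\<le>d. ell d a b i k * outer d b k j)"
    by (simp add: distrib_left sum.distrib)
  also have "\<dots> = ell d a b i j"
    unfolding ell_mult_outer[OF d_pos assms] using assms a_unit b_unit a_b_orth
    by (simp add: form_commute[of d b a] ell_def)
  finally show ?thesis .
qed

lemma mpow_rotation:
  "mpow d (\<lambda>i j. \<i> * complex_of_real (\<rho> * ell d a b i j)) n =
    (\<lambda>i j. if n = 0 then mone d i j
           else if even n then complex_of_real (\<rho>^n * proj i j)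
           else \<i> * complex_of_real (\<rho>^n * ell d a b i j))"
proof (rule mpow_eqI)
  fix n :: nat and i j assume ij: "i \<le> d" "j \<le> d"
  consider "n = 0" | "n \<noteq> 0" "even n" | "odd n" by blast
  then show "(\<Sum>k\<le>d. \<i> * complex_of_real (\<rho> * ell d a b i k) *
          (if n = 0 then mone d k j else if even n then complex_of_real (\<rho>^n * proj k j)
           else \<i> * complex_of_real (\<rho>^n * ell d a b k j))) =
        (if Suc n = 0 then mone d i j else if even (Suc n) then complex_of_real (\<rho>^Suc n * proj i j)
         else \<i> * complex_of_real (\<rho>^Suc n * ell d a b i j))"
  proof cases
    case 1
    then show ?thesis using ij by (simp add: mult_mone_right)
  next
    case 2
    have "(\<Sum>k\<le>d. \<i> * complex_of_real (\<rho> * ell d a b i k) * complex_of_real (\<rho>^n * proj k j))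
        = \<i> * complex_of_real (\<rho>^Suc n * (\<Sum>k\<le>d. ell d a b i k * proj k j))"
      by (simp add: sum_distrib_left algebra_simps)
    then show ?thesis using 2 ij by (simp add: ell_mult_proj)
  next
    case 3
    have "(\<Sum>k\<le>d. \<i> * complex_of_real (\<rho> * ell d a b i k) * (\<i> * complex_of_real (\<rho>^n * ell d a b k j)))
        = - complex_of_real (\<rho>^Suc n * (\<Sum>k\<le>d. ell d a b i k * ell d a b k j))"
      by (simp add: sum_distrib_left algebra_simps sum_negf)
    also have "\<dots> = complex_of_real (\<rho>^Suc n * proj i j)"
      unfolding ell_mult_ell_eq[OF ij] by (simp only: mult_minus_right of_real_minus minus_minus)
    finally show ?thesis using 3 odd_pos[OF 3] by simp
  qed
qed (auto simp: mats_def mone_def outer_def ell_def)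

lemma mexp_rotation:
  "mexp d (\<lambda>i j. \<i> * complex_of_real (\<rho> * ell d a b i j)) i j =
    complex_of_real (mone d i j + (cosh \<rho> - 1) * proj i j) + \<i> * complex_of_real (sinh \<rho> * ell d a b i j)"
proof -
  define P where "P = complex_of_real (proj i j)"
  define E where "E = \<i> * complex_of_real (ell d a b i j)"
  define I where "I = complex_of_real (mone d i j)"
  have "(\<lambda>n. (if n = 0 then I - P else 0) + complex_of_real (if even n then \<rho>^n /\<^sub>R fact n else 0) * P
             + complex_of_real (if even n then 0 else \<rho>^n /\<^sub>R fact n) * E)
        sums ((I - P) + complex_of_real (cosh \<rho>) * P + complex_of_real (sinh \<rho>) * E)"
    by (intro sums_add sums_mult2 sums_of_real cosh_converges sinh_converges sums_single)
  also have "(\<lambda>n. (if n = 0 then I - P else 0) + complex_of_real (if even n then \<rho>^n /\<^sub>R fact n else 0) * P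
             + complex_of_real (if even n then 0 else \<rho>^n /\<^sub>R fact n) * E)
      = (\<lambda>n. mpow d (\<lambda>i j. \<i> * complex_of_real (\<rho> * ell d a b i j)) n i j / of_nat (fact n))"
    by (unfold mpow_rotation) (auto simp: P_def E_def I_def field_simps)
  finally show ?thesis
    unfolding mexp_def by (simp add: sums_iff P_def E_def I_def algebra_simps)
qed

lemma expi_apply_rotation:
  assumes "i \<le> d"
  shows "expi_apply d (\<lambda>i j. \<rho> * ell d a b i j) c i =
    complex_of_real (c i + (cosh \<rho> - 1) * (a i * form d a c + b i * form d b c))
    + \<i> * complex_of_real (sinh \<rho> * (a i * form d b c - b i * form d a c))"
proof -
  have "expi_apply d (\<lambda>i j. \<rho> * ell d a b i j) c i
      = complex_of_real (c i + (\<Sum>j\<le>d. (cosh \<rho> - 1) * proj i j * c j))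
        + \<i> * complex_of_real (\<Sum>j\<le>d. sinh \<rho> * ell d a b i j * c j)"
    by (rule expi_apply_from_mexp[OF mexp_rotation assms])
  also have "(\<Sum>j\<le>d. (cosh \<rho> - 1) * proj i j * c j)
      = (cosh \<rho> - 1) * ((\<Sum>j\<le>d. outer d a i j * c j) + (\<Sum>j\<le>d. outer d b i j * c j))"
    by (subst sum.distrib[symmetric], subst sum_distrib_left) (simp add: algebra_simps)
  also have "(\<Sum>j\<le>d. sinh \<rho> * ell d a b i j * c j) = sinh \<rho> * (\<Sum>j\<le>d. ell d a b i j * c j)"
    by (simp add: sum_distrib_left mult.assoc)
  finally show ?thesis
    unfolding outer_mult_sum[OF d_pos assms] ell_mult_sum[OF d_pos assms] .
qed

end

locale null_rotation =
  fixes d :: nat and \<beta> n :: "nat \<Rightarrow> real"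
  assumes d_pos: "1 \<le> d" and orth: "form d \<beta> n = 0" and null: "form d n n = 0"
begin

lemma mpow_null_rotation:
  "mpow d (\<lambda>i j. \<i> * complex_of_real (ell d \<beta> n i j)) m =
    (\<lambda>i j. if m = 0 then mone d i j else if m = 1 then \<i> * complex_of_real (ell d \<beta> n i j)
      else if m = 2 then complex_of_real (form d \<beta> \<beta> * outer d n i j) else 0)"
proof (rule mpow_eqI)
  fix m :: nat and i j assume ij: "i \<le> d" "j \<le> d"
  consider "m = 0" | "m = 1" | "m = 2" | "m > 2" by linarith
  then show "(\<Sum>k\<le>d. \<i> * complex_of_real (ell d \<beta> n i k) *
          (if m = 0 then mone d k j else if m = 1 then \<i> * complex_of_real (ell d \<beta> n k j)
           else if m = 2 then complex_of_real (form d \<beta> \<beta> * outer d n k j) else 0)) =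
        (if Suc m = 0 then mone d i j else if Suc m = 1 then \<i> * complex_of_real (ell d \<beta> n i j)
         else if Suc m = 2 then complex_of_real (form d \<beta> \<beta> * outer d n i j) else 0)"
  proof cases
    case 1
    then show ?thesis using ij by (simp add: mult_mone_right)
  next
    case 2
    have "(\<Sum>k\<le>d. \<i> * complex_of_real (ell d \<beta> n i k) * (\<i> * complex_of_real (ell d \<beta> n k j)))
        = - complex_of_real (\<Sum>k\<le>d. ell d \<beta> n i k * ell d \<beta> n k j)"
      by (simp add: sum_distrib_left algebra_simps sum_negf)
    then show ?thesis
      using 2 ij d_pos orth null by (simp add: ell_mult_ell form_commute[of d n \<beta>] outer_def)
  next
    case 3
    have "(\<Sum>k\<le>d. \<i> * complex_of_real (ell d \<beta> n i k) * complex_of_real (form d \<beta> \<beta> * outer d n k j))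
        = \<i> * complex_of_real (form d \<beta> \<beta> * (\<Sum>k\<le>d. ell d \<beta> n i k * outer d n k j))"
      by (simp add: sum_distrib_left algebra_simps)
    then show ?thesis
      using 3 ij d_pos orth null by (simp add: ell_mult_outer form_commute[of d n \<beta>])
  next
    case 4
    then show ?thesis by simp
  qed
qed (auto simp: mats_def mone_def outer_def ell_def)

lemma mexp_null_rotation:
  "mexp d (\<lambda>i j. \<i> * complex_of_real (ell d \<beta> n i j)) i j =
    complex_of_real (mone d i j + form d \<beta> \<beta> / 2 * outer d n i j) + \<i> * complex_of_real (ell d \<beta> n i j)"
proof -
  have "(\<lambda>m. mpow d (\<lambda>i j. \<i> * complex_of_real (ell d \<beta> n i j)) m i j / of_nat (fact m)) sums
      (\<Sum>m\<in>{0,1,2}. mpow d (\<lambda>i j. \<i> * complex_of_real (ell d \<beta> n i j)) m i j / of_nat (fact m))"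
    by (rule sums_finite) (auto simp: mpow_null_rotation)
  then show ?thesis
    unfolding mexp_def by (simp add: sums_iff mpow_null_rotation)
qed

definition expi_re :: "(nat \<Rightarrow> real) \<Rightarrow> nat \<Rightarrow> real" where
  "expi_re c = (\<lambda>k. c k + form d \<beta> \<beta> * form d n c / 2 * n k)"

definition expi_im :: "(nat \<Rightarrow> real) \<Rightarrow> nat \<Rightarrow> real" where
  "expi_im c = (\<lambda>k. form d n c * \<beta> k - form d \<beta> c * n k)"

lemma expi_apply_null_rotation:
  assumes "i \<le> d"
  shows "expi_apply d (ell d \<beta> n) c i = complex_of_real (expi_re c i) + \<i> * complex_of_real (expi_im c i)"
proof -
  have "expi_apply d (ell d \<beta> n) c i
      = complex_of_real (c i + (\<Sum>j\<le>d. form d \<beta> \<beta> / 2 * outer d n i j * c j))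
        + \<i> * complex_of_real (\<Sum>j\<le>d. ell d \<beta> n i j * c j)"
    by (rule expi_apply_from_mexp[OF mexp_null_rotation assms])
  also have "(\<Sum>j\<le>d. form d \<beta> \<beta> / 2 * outer d n i j * c j) = form d \<beta> \<beta> / 2 * (\<Sum>j\<le>d. outer d n i j * c j)"
    by (simp add: sum_distrib_left mult.assoc)
  finally show ?thesis
    unfolding outer_mult_sum[OF d_pos assms] ell_mult_sum[OF d_pos assms] expi_re_def expi_im_def
    by (simp add: algebra_simps)
qed

lemma form_expi_re_im: "form d (expi_re c) (expi_im c) = 0"
  using orth null
  by (simp add: expi_re_def expi_im_def form_commute[of d c \<beta>] form_commute[of d n \<beta>] form_commute[of d c n])

lemma form_expi_im_im: "form d (expi_im c) (expi_im c) = (form d n c)^2 * form d \<beta> \<beta>"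
  using orth null by (simp add: expi_im_def form_commute[of d n \<beta>] power2_eq_square algebra_simps)

lemma form_expi_re_re: "form d (expi_re c) (expi_re c) - form d (expi_im c) (expi_im c) = form d c c"
  using null by (simp add: form_expi_im_im expi_re_def form_commute[of d c n] power2_eq_square algebra_simps)

lemma form_null_expi_im: "form d n (expi_im c) = 0"
  using orth null by (simp add: expi_im_def form_commute[of d n \<beta>])

lemma form_null_expi_re: "form d n (expi_re c) = form d n c"
  using null by (simp add: expi_re_def)

lemma ell_expi_im: "ell d (expi_im c) n i j = form d n c * ell d \<beta> n i j"
  by (simp add: ell_def expi_im_def algebra_simps)

lemma expi_null_rotation_in_Xdc:
  assumes "form d c c = 1"
  shows "expi_apply d (ell d \<beta> n) c \<in> Xdc d"
proof -
  have "form d (expi_apply d (ell d \<beta> n) c) (expi_apply d (ell d \<beta> n) c)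
      = form d (\<lambda>k. complex_of_real (expi_re c k) + \<i> * complex_of_real (expi_im c k))
               (\<lambda>k. complex_of_real (expi_re c k) + \<i> * complex_of_real (expi_im c k))"
    by (rule form_cong) (simp_all add: expi_apply_null_rotation)
  also have "\<dots> = 1"
    unfolding form_complex_self form_expi_re_re form_expi_re_im assms by simp
  finally show ?thesis
    unfolding Xdc_def vecs_def by (simp add: expi_apply_def mapply_def)
qed

end

lemma tanh_artanh_real:
  assumes "\<bar>t\<bar> < (1::real)"
  shows "tanh (artanh t) = t"
proof -
  have "0 < 1 + t" "0 < 1 - t" using assms by auto
  then have "- 2 * artanh t = ln (1 - t) - ln (1 + t)"
    by (simp add: artanh_def ln_div)
  then have exp_eq: "exp (- 2 * artanh t) = (1 - t) / (1 + t)"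
    using \<open>0 < 1 + t\<close> \<open>0 < 1 - t\<close> by (simp add: exp_diff)
  show ?thesis
    unfolding tanh_real_altdef exp_eq using \<open>0 < 1 + t\<close> by (simp add: field_simps)
qed

lemma sinh_eq_tanh_mult_cosh_real: "sinh x = tanh x * cosh (x::real)"
  by (simp add: tanh_def)

lemma cosh_artanh_real:
  assumes "\<bar>t\<bar> < (1::real)"
  shows "cosh (artanh t) = 1 / sqrt (1 - t^2)"
proof -
  have "(cosh (artanh t))^2 * (1 - t^2) = 1"
    using cosh_square_eq[of "artanh t"] sinh_eq_tanh_mult_cosh_real[of "artanh t"]
    by (simp add: tanh_artanh_real[OF assms] algebra_simps)
  then have "cosh (artanh t) * sqrt (1 - t^2) = 1"
    by (metis cosh_real_nonneg real_sqrt_mult real_sqrt_one real_sqrt_unique)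
  moreover have "0 < 1 - t^2" using assms by (simp add: abs_square_less_1)
  ultimately show ?thesis
    by (simp add: field_simps)
qed

lemma sinh_artanh_real:
  assumes "\<bar>t\<bar> < (1::real)"
  shows "sinh (artanh t) = t / sqrt (1 - t^2)"
  using sinh_eq_tanh_mult_cosh_real[of "artanh t"]
  by (simp add: tanh_artanh_real[OF assms] cosh_artanh_real[OF assms])

definition gram :: "nat \<Rightarrow> (nat \<Rightarrow> real) \<Rightarrow> (nat \<Rightarrow> real) \<Rightarrow> real" where
  "gram d p y = form d y y * form d p p - (form d p y)^2"

definition rep_admissible :: "nat \<Rightarrow> (nat \<Rightarrow> real) \<Rightarrow> (nat \<Rightarrow> real) \<Rightarrow> (nat \<Rightarrow> real) \<Rightarrow> bool" where
  "rep_admissible d p x y \<longleftrightarrow>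
     0 < form d y y \<and> 0 < gram d p y \<and> 0 < form d x p \<and> gram d p y < (form d x p)^2"

definition rep_tanh :: "nat \<Rightarrow> (nat \<Rightarrow> real) \<Rightarrow> (nat \<Rightarrow> real) \<Rightarrow> (nat \<Rightarrow> real) \<Rightarrow> real" where
  "rep_tanh d p x y = sqrt (gram d p y) / form d x p"

definition perp_part :: "nat \<Rightarrow> (nat \<Rightarrow> real) \<Rightarrow> (nat \<Rightarrow> real) \<Rightarrow> nat \<Rightarrow> real" where
  "perp_part d p y = (\<lambda>k. p k - form d p y / form d y y * y k)"

(* With t = rep_tanh, the generator is artanh t * ell(a, b) for a, b the normalized p_perp and -y
   (lemma rep_gen_eq).  It is written as a multiple of ell(y, p), and the coefficient in rep_base as
   1 / (1 + sqrt (1 - t^2)) rather than (1 - sqrt (1 - t^2)) / t^2, so that both formulas stay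
   meaningful as the Gram determinant tends to 0. *)
definition rep_gen :: "nat \<Rightarrow> (nat \<Rightarrow> real) \<Rightarrow> (nat \<Rightarrow> real) \<Rightarrow> (nat \<Rightarrow> real) \<Rightarrow> nat \<Rightarrow> nat \<Rightarrow> real" where
  "rep_gen d p x y =
     (\<lambda>i j. artanh (rep_tanh d p x y) / rep_tanh d p x y / form d x p * ell d y p i j)"

definition rep_base :: "nat \<Rightarrow> (nat \<Rightarrow> real) \<Rightarrow> (nat \<Rightarrow> real) \<Rightarrow> (nat \<Rightarrow> real) \<Rightarrow> nat \<Rightarrow> real" where
  "rep_base d p x y = (\<lambda>k. x k - form d y y / ((1 + sqrt (1 - (rep_tanh d p x y)^2)) * form d x p)
                                * perp_part d p y k)"

lemma rep_tanh_bounds: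
  assumes "rep_admissible d p x y"
  shows "0 < rep_tanh d p x y" "rep_tanh d p x y < 1"
proof -
  have G: "0 < gram d p y" and X: "0 < form d x p" and GX: "gram d p y < (form d x p)^2"
    using assms by (auto simp: rep_admissible_def)
  have "sqrt (gram d p y) < sqrt ((form d x p)^2)" using GX by (simp only: real_sqrt_less_iff)
  then show "0 < rep_tanh d p x y" "rep_tanh d p x y < 1"
    using G X by (simp_all add: rep_tanh_def)
qed

locale rep_data =
  fixes d :: nat and p x y :: "nat \<Rightarrow> real"
  assumes d_pos: "1 \<le> d" and orth: "form d x y = 0" and admissible: "rep_admissible d p x y"
begin

abbreviation "Y \<equiv> form d y y"
abbreviation "X \<equiv> form d x p"
abbreviation "G \<equiv> gram d p y"
abbreviation "t \<equiv> rep_tanh d p x y"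
abbreviation "q \<equiv> sqrt (1 - t^2)"
abbreviation "\<kappa> \<equiv> Y / ((1 + q) * X)"
abbreviation "a \<equiv> normalized d (perp_part d p y)"
abbreviation "b \<equiv> normalized d (\<lambda>k. - y k)"

lemma Y_pos: "0 < Y" and G_pos: "0 < G" and X_pos: "0 < X"
  using admissible by (auto simp: rep_admissible_def)

lemma t_pos: "0 < t" and t_less_1: "t < 1"
  using rep_tanh_bounds[OF admissible] by simp_all

lemma q_pos: "0 < q" and q_less_1: "q < 1" and q_sq: "q^2 = 1 - t^2"
proof -
  have "t^2 < 1" "0 < t^2" using t_pos t_less_1 by (simp_all add: power_less_one_iff)
  then show "0 < q" "q < 1" "q^2 = 1 - t^2" by simp_all
qed

lemma sqrt_G_eq: "sqrt G = t * X"
  using X_pos by (simp add: rep_tanh_def)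

lemma G_eq: "G = (1 - q) * ((1 + q) * X) * X"
proof -
  have "G = (sqrt G)^2" using G_pos by simp
  also have "\<dots> = (1 - q^2) * X^2" unfolding sqrt_G_eq q_sq by (simp add: power_mult_distrib)
  finally show ?thesis by (simp add: power2_eq_square algebra_simps)
qed

lemma one_plus_q_X_nonzero: "(1 + q) * X \<noteq> 0"
proof -
  have "0 < 1 + q" using q_pos by linarith
  then show ?thesis using X_pos by simp
qed

lemma X_sub_kappa: "X - \<kappa> * (G / Y) = q * X"
proof -
  have "X - Y / K * ((1 - q) * K * X / Y) = q * X" if "K \<noteq> 0" for K
    using that Y_pos by (simp add: field_simps)
  then show ?thesis
    unfolding G_eq using one_plus_q_X_nonzero by blast
qed

lemma kappa_eq: "(1 - q) * X * Y / G = \<kappa>"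
proof -
  have "(1 - q) * X * Y / ((1 - q) * K * X) = Y / K" if "K \<noteq> 0" for K
    using that q_less_1 X_pos by (simp add: field_simps)
  then show ?thesis
    unfolding G_eq using one_plus_q_X_nonzero by blast
qed

lemma kappa_mult: "\<kappa> * X * (1 + q) = Y"
  using one_plus_q_X_nonzero by (simp add: field_simps)

lemma cosh_artanh: "cosh (artanh t) = 1 / q"
  using t_pos t_less_1 by (simp add: cosh_artanh_real)

lemma sinh_artanh: "sinh (artanh t) = t / q"
  using t_pos t_less_1 by (simp add: sinh_artanh_real)

lemma artanh_pos: "0 < artanh t"
proof -
  have "\<bar>t\<bar> < 1" using t_pos t_less_1 by simp
  then have "0 < tanh (artanh t)" using t_pos by (simp add: tanh_artanh_real)
  then show ?thesis by simp
qed

lemma perp_y: "form d (perp_part d p y) y = 0"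
  using Y_pos by (simp add: perp_part_def)

lemma perp_perp: "form d (perp_part d p y) (perp_part d p y) = G / Y"
  using Y_pos by (simp add: perp_part_def gram_def form_commute[of d y p] field_simps power2_eq_square)

lemma perp_x: "form d (perp_part d p y) x = X"
  using Y_pos orth by (simp add: perp_part_def form_commute[of d p x] form_commute[of d y x])

lemma x_perp: "form d x (perp_part d p y) = X"
  using perp_x by (simp add: form_commute)

lemma a_eq: "a k = perp_part d p y k * sqrt Y / sqrt G"
  using Y_pos G_pos by (simp add: normalized_def perp_perp real_sqrt_divide)

lemma b_eq: "b k = - y k / sqrt Y"
  by (simp add: normalized_def)

lemma orthonormal: "orthonormal_pair d a b"
proof
  show "form d a a = 1"
    using G_pos Y_pos by (simp add: form_normalized perp_perp)
  show "form d b b = 1"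
    using Y_pos by (simp add: form_normalized)
  show "form d a b = 0"
    by (simp add: normalized_def perp_y)
qed (rule d_pos)

lemma wedge_a_b: "a u * b v - a v * b u = (y u * p v - y v * p u) / sqrt G"
proof -
  have "\<And>A B C D S R :: real. 0 < S \<Longrightarrow> 0 < R \<Longrightarrow>
      A * S / R * (- C / S) - D * S / R * (- B / S) = (B * D - C * A) / R"
    by (simp add: field_simps)
  then have "a u * b v - a v * b u
      = (y u * perp_part d p y v - y v * perp_part d p y u) / sqrt G"
    unfolding a_eq b_eq using Y_pos G_pos by simp
  then show ?thesis
    by (simp add: perp_part_def algebra_simps)
qed

lemma rep_gen_eq: "rep_gen d p x y = (\<lambda>i j. artanh t * ell d a b i j)"
proof (intro ext)
  fix i j
  show "rep_gen d p x y i j = artanh t * ell d a b i j"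
  proof (cases "i \<le> d \<and> j \<le> d")
    case True
    then have "ell d a b i j = ell d y p i j / sqrt G"
      using d_pos by (simp add: ell_eq_wedge wedge_a_b)
    then show ?thesis
      using t_pos X_pos by (simp add: rep_gen_def sqrt_G_eq)
  qed (auto simp: rep_gen_def ell_def)
qed

lemma rep_base_eq: "rep_base d p x y = (\<lambda>k. x k - \<kappa> * perp_part d p y k)"
  by (simp add: rep_base_def)

lemma form_a_base: "form d a (rep_base d p x y) = q * X * sqrt Y / sqrt G"
proof -
  have "form d a (rep_base d p x y)
      = (form d (perp_part d p y) x - \<kappa> * form d (perp_part d p y) (perp_part d p y)) * sqrt Y / sqrt G"
    unfolding rep_base_eq a_eq
    by (simp only: form_divide_left form_scale_left' form_diff_right form_scale_right)
  then show ?thesis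
    unfolding perp_x perp_perp X_sub_kappa .
qed

lemma form_b_base: "form d b (rep_base d p x y) = 0"
  unfolding rep_base_eq b_eq by (simp add: form_commute[of d y x] form_commute[of d y "perp_part d p y"] orth perp_y)

lemma expi_apply_rep:
  assumes "k \<le> d"
  shows "expi_apply d (rep_gen d p x y) (rep_base d p x y) k
    = complex_of_real (x k) + \<i> * complex_of_real (y k)"
proof -
  interpret orthonormal_pair d a b by (rule orthonormal)
  have re: "rep_base d p x y k + (1 / q - 1) * (a k * (q * X * sqrt Y / sqrt G)) = x k"
  proof -
    have gen: "\<And>P S R. 0 < S \<Longrightarrow> 0 < R \<Longrightarrow>
        (1 / q - 1) * (P * S / R * (q * X * S / R)) = (1 - q) * X * (S * S) / (R * R) * P"
      using q_pos by (simp add: field_simps)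
    have "(1 / q - 1) * (a k * (q * X * sqrt Y / sqrt G))
        = (1 - q) * X * (sqrt Y * sqrt Y) / (sqrt G * sqrt G) * perp_part d p y k"
      unfolding a_eq by (rule gen) (use Y_pos G_pos in auto)
    also have "\<dots> = \<kappa> * perp_part d p y k"
      using Y_pos G_pos kappa_eq by simp
    finally show ?thesis by (simp add: rep_base_eq)
  qed
  have im: "t / q * (- b k * (q * X * sqrt Y / sqrt G)) = y k"
  proof -
    have gen: "\<And>P S R. 0 < S \<Longrightarrow> 0 < R \<Longrightarrow> t / q * (- (- P / S) * (q * X * S / R)) = t * X / R * P"
      using q_pos by (simp add: field_simps)
    have "t / q * (- b k * (q * X * sqrt Y / sqrt G)) = t * X / sqrt G * y k"
      unfolding b_eq by (rule gen) (use Y_pos G_pos in auto)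
    also have "\<dots> = y k"
      unfolding sqrt_G_eq using t_pos X_pos by simp
    finally show ?thesis .
  qed
  show ?thesis
    unfolding rep_gen_eq expi_apply_rotation[OF assms] cosh_artanh sinh_artanh form_a_base form_b_base
    using re im by simp
qed

lemma form_rep_base: "form d (rep_base d p x y) (rep_base d p x y) = form d x x - Y"
proof -
  have "form d (rep_base d p x y) (rep_base d p x y)
      = form d x x - \<kappa> * X - (\<kappa> * X - \<kappa> * (\<kappa> * (G / Y)))"
    unfolding rep_base_eq
    by (simp only: form_diff_left form_diff_right form_scale_left form_scale_right perp_x x_perp perp_perp)
  also have "\<kappa> * (G / Y) = X - q * X"
    using X_sub_kappa by simp
  also have "form d x x - \<kappa> * X - (\<kappa> * X - \<kappa> * (X - q * X)) = form d x x - \<kappa> * X * (1 + q)"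
  proof -
    have "Z - K * X - (K * X - K * (X - q * X)) = Z - K * X * (1 + q)" for Z K
      by (simp add: algebra_simps)
    then show ?thesis .
  qed
  also have "\<dots> = form d x x - Y"
    unfolding kappa_mult ..
  finally show ?thesis .
qed

lemma rep_gen_in_Cplus:
  assumes "p \<in> vecs d" "y \<in> vecs d" "0 < y 0 * p d - y d * p 0"
  shows "rep_gen d p x y \<in> Cplus d"
proof -
  interpret orthonormal_pair d a b by (rule orthonormal)
  have "0 < a 0 * b d - a d * b 0"
    unfolding wedge_a_b using assms(3) G_pos by simp
  moreover have "a \<in> vecs d" "b \<in> vecs d"
    using assms(1,2) by (auto simp: vecs_def normalized_def perp_part_def)
  ultimately have "ell d a b \<in> C1 d"
    unfolding C1_def using a_unit b_unit a_b_orth by blast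
  then show ?thesis
    unfolding Cplus_def rep_gen_eq using artanh_pos by blast
qed

lemma rep_base_in_Xd:
  assumes "p \<in> vecs d" "x \<in> vecs d" "y \<in> vecs d" "form d x x - Y = 1"
  shows "rep_base d p x y \<in> Xd d"
  using assms form_rep_base by (auto simp: vecs_def rep_base_eq perp_part_def Xd_def)

end

lemma tendsto_form:
  fixes f g :: "'w \<Rightarrow> nat \<Rightarrow> real"
  assumes "\<And>k. k \<le> d \<Longrightarrow> ((\<lambda>w. f w k) \<longlongrightarrow> f0 k) F" "\<And>k. k \<le> d \<Longrightarrow> ((\<lambda>w. g w k) \<longlongrightarrow> g0 k) F"
  shows "((\<lambda>w. form d (f w) (g w)) \<longlongrightarrow> form d f0 g0) F"
  unfolding form_def
proof (intro tendsto_intros)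
  fix k assume "k \<in> {1..d-1}"
  then show "((\<lambda>w. f w k) \<longlongrightarrow> f0 k) F" "((\<lambda>w. g w k) \<longlongrightarrow> g0 k) F"
    using assms by auto
qed (use assms in auto)

lemma tendsto_ell:
  fixes f g :: "'w \<Rightarrow> nat \<Rightarrow> real"
  assumes "\<And>k. k \<le> d \<Longrightarrow> ((\<lambda>w. f w k) \<longlongrightarrow> f0 k) F" "\<And>k. k \<le> d \<Longrightarrow> ((\<lambda>w. g w k) \<longlongrightarrow> g0 k) F"
  shows "((\<lambda>w. ell d (f w) (g w) i j) \<longlongrightarrow> ell d f0 g0 i j) F"
proof (cases "i \<le> d \<and> j \<le> d")
  case True
  then show ?thesis
    unfolding ell_def using assms by (simp, intro tendsto_intros tendsto_form) auto
qed (auto simp: ell_def)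

lemma tendsto_gram:
  fixes f :: "'w \<Rightarrow> nat \<Rightarrow> real"
  assumes "\<And>k. k \<le> d \<Longrightarrow> ((\<lambda>w. f w k) \<longlongrightarrow> f0 k) F"
  shows "((\<lambda>w. gram d p (f w)) \<longlongrightarrow> gram d p f0) F"
  unfolding gram_def using assms by (intro tendsto_intros tendsto_form) auto

lemma tendsto_matdist:
  assumes "\<And>i j. i \<le> d \<Longrightarrow> j \<le> d \<Longrightarrow> ((\<lambda>w. A w i j) \<longlongrightarrow> A0 i j) F"
  shows "((\<lambda>w. matdist d (A w) B) \<longlongrightarrow> matdist d A0 B) F"
  unfolding matdist_def using assms by (intro tendsto_intros) auto

lemma tendsto_vdist:
  assumes "\<And>k. k \<le> d \<Longrightarrow> ((\<lambda>w. u w k) \<longlongrightarrow> u0 k) F"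
  shows "((\<lambda>w. vdist d (u w) (c :: nat \<Rightarrow> real)) \<longlongrightarrow> vdist d u0 c) F"
  unfolding vdist_def using assms by (intro tendsto_intros) auto

context
  fixes d :: nat and p x y :: "nat \<Rightarrow> real" and xs ys :: "'w \<Rightarrow> nat \<Rightarrow> real" and F
  assumes admissible: "rep_admissible d p x y"
    and x_lim: "\<And>k. k \<le> d \<Longrightarrow> ((\<lambda>w. xs w k) \<longlongrightarrow> x k) F"
    and y_lim: "\<And>k. k \<le> d \<Longrightarrow> ((\<lambda>w. ys w k) \<longlongrightarrow> y k) F"
begin

private lemma Y_lim: "((\<lambda>w. form d (ys w) (ys w)) \<longlongrightarrow> form d y y) F"
  by (rule tendsto_form[OF y_lim y_lim])

private lemma X_lim: "((\<lambda>w. form d (xs w) p) \<longlongrightarrow> form d x p) F"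
  by (rule tendsto_form[OF x_lim]) auto

private lemma G_lim: "((\<lambda>w. gram d p (ys w)) \<longlongrightarrow> gram d p y) F"
  by (rule tendsto_gram[OF y_lim])

private lemma t_lim: "((\<lambda>w. rep_tanh d p (xs w) (ys w)) \<longlongrightarrow> rep_tanh d p x y) F"
  unfolding rep_tanh_def using admissible
  by (intro tendsto_intros G_lim X_lim) (auto simp: rep_admissible_def)

private lemma one_plus_q_pos: "0 < 1 + sqrt (1 - (rep_tanh d p x y)^2)"
proof -
  have "(rep_tanh d p x y)^2 < 1"
    using rep_tanh_bounds[OF admissible] by (simp add: power_less_one_iff)
  then show ?thesis by (simp add: add_pos_pos)
qed

lemma eventually_rep_admissible: "eventually (\<lambda>w. rep_admissible d p (xs w) (ys w)) F"
proof -
  have "((\<lambda>w. (form d (xs w) p)^2 - gram d p (ys w)) \<longlongrightarrow> (form d x p)^2 - gram d p y) F"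
    by (intro tendsto_intros X_lim G_lim)
  then have "eventually (\<lambda>w. 0 < (form d (xs w) p)^2 - gram d p (ys w)) F"
    using admissible by (intro order_tendstoD(1)) (auto simp: rep_admissible_def)
  moreover have "eventually (\<lambda>w. 0 < form d (ys w) (ys w)) F"
    "eventually (\<lambda>w. 0 < gram d p (ys w)) F" "eventually (\<lambda>w. 0 < form d (xs w) p) F"
    using admissible order_tendstoD(1)[OF Y_lim] order_tendstoD(1)[OF G_lim] order_tendstoD(1)[OF X_lim]
    by (auto simp: rep_admissible_def)
  ultimately show ?thesis
    by eventually_elim (auto simp: rep_admissible_def)
qed

lemma tendsto_rep_gen: "((\<lambda>w. rep_gen d p (xs w) (ys w) i j) \<longlongrightarrow> rep_gen d p x y i j) F"
  unfolding rep_gen_def using admissible rep_tanh_bounds[OF admissible]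
  by (intro tendsto_intros t_lim X_lim tendsto_ell y_lim) (auto simp: rep_admissible_def)

lemma tendsto_rep_base: "k \<le> d \<Longrightarrow> ((\<lambda>w. rep_base d p (xs w) (ys w) k) \<longlongrightarrow> rep_base d p x y k) F"
  unfolding rep_base_def perp_part_def using admissible one_plus_q_pos
  by (intro tendsto_intros t_lim X_lim Y_lim x_lim y_lim tendsto_form) (auto simp: rep_admissible_def)

end

definition null_vec :: "nat \<Rightarrow> nat \<Rightarrow> real" where
  "null_vec d = (\<lambda>k. unitv d k - unitv (d - 1) k)"

(* A non-null direction that degenerates to the null vector n = null_vec d of L as s -> 0+. *)
definition tilted_null :: "nat \<Rightarrow> real \<Rightarrow> nat \<Rightarrow> real" where
  "tilted_null d s = (\<lambda>k. null_vec d k + s * unitv d k)"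

lemma form_unitv_last: "1 \<le> d \<Longrightarrow> form d (unitv d) w = w d"
  using form_unitv_right[of d w d] by (simp add: form_commute form_sign_def)

lemma form_null_vec:
  assumes "2 \<le> d"
  shows "form d (null_vec d) w = w d + w (d - 1)"
proof -
  have "form d (unitv (d - 1)) w = - w (d - 1)"
    using assms form_unitv_right[of d w "d - 1"] by (simp add: form_commute form_sign_def)
  then show ?thesis
    using assms by (simp add: null_vec_def form_unitv_last)
qed

lemma null_vec_last: "1 \<le> d \<Longrightarrow> null_vec d d = 1"
  by (simp add: null_vec_def unitv_def)

lemma null_vec_first: "2 \<le> d \<Longrightarrow> null_vec d 0 = 0"
  by (simp add: null_vec_def unitv_def)

lemma null_vec_pred: "2 \<le> d \<Longrightarrow> null_vec d (d - 1) = -1"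
  by (simp add: null_vec_def unitv_def)

lemma form_null_vec_self: "2 \<le> d \<Longrightarrow> form d (null_vec d) (null_vec d) = 0"
  using null_vec_last[of d] null_vec_pred[of d] by (simp add: form_null_vec)

lemma tilted_null_in_vecs: "tilted_null d s \<in> vecs d"
  by (simp add: tilted_null_def null_vec_def unitv_def vecs_def)

lemma artanh_div_tendsto: "((\<lambda>t::real. artanh t / t) \<longlongrightarrow> 1) (at_right 0)"
  unfolding artanh_def by real_asymp

context
  fixes d :: nat and x y :: "nat \<Rightarrow> real"
  assumes d2: "2 \<le> d" and Y_pos: "0 < form d y y"
    and null_y: "form d (null_vec d) y = 0" and E_pos: "0 < form d (null_vec d) x"
begin

private lemma form_tilted: "form d (tilted_null d s) w = form d (null_vec d) w + s * w d"
  using d2 by (simp add: tilted_null_def form_unitv_last)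

private lemma x_tilted: "form d x (tilted_null d s) = form d (null_vec d) x + s * x d"
  by (simp add: form_commute[of d x "tilted_null d s"] form_tilted)

private lemma gram_tilted: "gram d (tilted_null d s) y = s * (2 * form d y y + s * (form d y y - (y d)^2))"
proof -
  have "tilted_null d s d = 1 + s" "tilted_null d s (d - 1) = -1"
    using d2 null_vec_last[of d] null_vec_pred[of d] by (simp_all add: tilted_null_def unitv_def)
  then have "form d (tilted_null d s) (tilted_null d s) = 2 * s + s^2"
    using d2 by (simp add: form_tilted form_null_vec power2_eq_square algebra_simps)
  then show ?thesis
    by (simp add: gram_def form_tilted form_commute[of d y "tilted_null d s"] null_y power2_eq_square algebra_simps)
qed

lemma eventually_tilted_admissible: "eventually (\<lambda>s. rep_admissible d (tilted_null d s) x y) (at_right 0)"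
proof -
  let ?E = "form d (null_vec d) x" and ?Y = "form d y y"
  let ?G = "\<lambda>s. s * (2 * ?Y + s * (?Y - (y d)^2))"
  have "((\<lambda>s. 2 * ?Y + s * (?Y - (y d)^2)) \<longlongrightarrow> 2 * ?Y + 0 * (?Y - (y d)^2)) (at_right 0)"
    "((\<lambda>s. ?E + s * x d) \<longlongrightarrow> ?E + 0 * x d) (at_right 0)"
    "((\<lambda>s. (?E + s * x d)^2 - ?G s) \<longlongrightarrow> (?E + 0 * x d)^2 - ?G 0) (at_right 0)"
    by (intro tendsto_intros)+
  then have "eventually (\<lambda>s. 0 < 2 * ?Y + s * (?Y - (y d)^2)) (at_right 0)"
    "eventually (\<lambda>s. 0 < ?E + s * x d) (at_right 0)"
    "eventually (\<lambda>s. 0 < (?E + s * x d)^2 - ?G s) (at_right 0)"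
    using Y_pos E_pos by (auto intro: order_tendstoD(1) simp del: diff_gt_0_iff_gt)
  moreover have "eventually (\<lambda>s. 0 < s) (at_right (0::real))"
    by (rule eventually_at_right_less)
  ultimately show ?thesis
    by eventually_elim (use Y_pos in \<open>simp add: rep_admissible_def gram_tilted x_tilted\<close>)
qed

private lemma tanh_tendsto_zero: "((\<lambda>s. rep_tanh d (tilted_null d s) x y) \<longlongrightarrow> 0) (at_right 0)"
proof -
  let ?E = "form d (null_vec d) x" and ?Y = "form d y y"
  have "((\<lambda>s. sqrt (s * (2 * ?Y + s * (?Y - (y d)^2))) / (?E + s * x d))
      \<longlongrightarrow> sqrt (0 * (2 * ?Y + 0 * (?Y - (y d)^2))) / (?E + 0 * x d)) (at_right 0)"
    using E_pos by (intro tendsto_intros) auto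
  then show ?thesis
    by (simp add: rep_tanh_def gram_tilted x_tilted)
qed

private lemma tanh_filterlim: "filterlim (\<lambda>s. rep_tanh d (tilted_null d s) x y) (at_right 0) (at_right 0)"
  using eventually_tilted_admissible
  by (intro tendsto_imp_filterlim_at_right[OF tanh_tendsto_zero]) (auto elim: eventually_mono rep_tanh_bounds)

private lemma tilted_tendsto: "((\<lambda>s. tilted_null d s k) \<longlongrightarrow> null_vec d k) (at_right 0)"
proof -
  have "((\<lambda>s. null_vec d k + s * unitv d k) \<longlongrightarrow> null_vec d k + 0 * unitv d k) (at_right 0)"
    by (intro tendsto_intros)
  then show ?thesis by (simp add: tilted_null_def)
qed

lemma rep_gen_tendsto_null:
  "((\<lambda>s. rep_gen d (tilted_null d s) x y i j) \<longlongrightarrow> ell d y (null_vec d) i j / form d (null_vec d) x)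
    (at_right 0)"
proof -
  let ?E = "form d (null_vec d) x" and ?t = "\<lambda>s. rep_tanh d (tilted_null d s) x y"
  have "((\<lambda>s. artanh (?t s) / ?t s / (?E + s * x d) * ell d y (tilted_null d s) i j)
      \<longlongrightarrow> 1 / (?E + 0 * x d) * ell d y (null_vec d) i j) (at_right 0)"
    using E_pos
    by (intro tendsto_mult tendsto_divide filterlim_compose[OF artanh_div_tendsto tanh_filterlim]
        tendsto_intros tendsto_ell tilted_tendsto) auto
  then show ?thesis
    by (simp add: rep_gen_def x_tilted)
qed

lemma rep_base_tendsto_null:
  "((\<lambda>s. rep_base d (tilted_null d s) x y k)
      \<longlongrightarrow> x k - form d y y / (2 * form d (null_vec d) x) * null_vec d k) (at_right 0)"
proof -
  let ?E = "form d (null_vec d) x" and ?Y = "form d y y" and ?t = "\<lambda>s. rep_tanh d (tilted_null d s) x y"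
  have "((\<lambda>s. x k - ?Y / ((1 + sqrt (1 - (?t s)^2)) * (?E + s * x d)) * (tilted_null d s k - s * y d / ?Y * y k))
      \<longlongrightarrow> x k - ?Y / ((1 + sqrt (1 - 0^2)) * (?E + 0 * x d)) * (null_vec d k - 0 * y d / ?Y * y k))
      (at_right 0)"
    using E_pos Y_pos by (intro tendsto_intros tanh_tendsto_zero tilted_tendsto) auto
  then show ?thesis
    by (simp add: rep_base_def perp_part_def x_tilted form_tilted null_y)
qed

end

lemma vdist_coordinate_tendsto:
  fixes z :: "nat \<Rightarrow> complex"
  assumes "k \<le> d"
  shows "((\<lambda>w. w k) \<longlongrightarrow> z k) (filtercomap (\<lambda>w. vdist d w z) (nhds 0))"
proof (rule tendstoI)
  fix e :: real assume "0 < e"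
  have le: "dist (w k) (z k) \<le> vdist d w z" for w
  proof -
    have "(norm (w k - z k))^2 \<le> (\<Sum>i\<le>d. (norm (w i - z i))^2)"
      using assms by (intro member_le_sum) auto
    then have "sqrt ((norm (w k - z k))^2) \<le> vdist d w z"
      unfolding vdist_def by (rule real_sqrt_le_mono)
    then show ?thesis by (simp add: dist_norm)
  qed
  have "eventually (\<lambda>w. vdist d w z < e) (filtercomap (\<lambda>w. vdist d w z) (nhds 0))"
    using \<open>0 < e\<close> by (intro order_tendstoD(2)[OF filterlim_filtercomap]) auto
  then show "eventually (\<lambda>w. dist (w k) (z k) < e) (filtercomap (\<lambda>w. vdist d w z) (nhds 0))"
    by eventually_elim (use le in \<open>auto intro: le_less_trans\<close>)
qed

lemma eventually_vdist_imp_ball: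
  fixes z :: "nat \<Rightarrow> complex"
  assumes "eventually P (filtercomap (\<lambda>w. vdist d w z) (nhds 0))"
  shows "\<exists>\<delta>>0. \<forall>w. vdist d w z < \<delta> \<longrightarrow> P w"
proof -
  obtain Q where "eventually Q (nhds 0)" and QP: "\<And>w. Q (vdist d w z) \<Longrightarrow> P w"
    using assms unfolding eventually_filtercomap by blast
  then obtain \<delta> where "0 < \<delta>" and \<delta>Q: "\<And>r. dist r 0 < \<delta> \<Longrightarrow> Q r"
    unfolding eventually_nhds_metric by blast
  have "0 \<le> vdist d w z" for w
    by (simp add: vdist_def sum_nonneg)
  then show ?thesis
    using \<open>0 < \<delta>\<close> QP \<delta>Q by (auto simp: dist_real_def)
qed

lemma Xdc_Re_Im:
  assumes "w \<in> Xdc d"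
  shows "form d (\<lambda>k. Re (w k)) (\<lambda>k. Re (w k)) - form d (\<lambda>k. Im (w k)) (\<lambda>k. Im (w k)) = 1"
    and "form d (\<lambda>k. Re (w k)) (\<lambda>k. Im (w k)) = 0"
    and "(\<lambda>k. Re (w k)) \<in> vecs d" "(\<lambda>k. Im (w k)) \<in> vecs d"
proof -
  have w: "w = (\<lambda>k. complex_of_real (Re (w k)) + \<i> * complex_of_real (Im (w k)))"
    by (intro ext) (simp add: complex_eq_iff)
  have "form d w w = 1" using assms by (simp add: Xdc_def)
  then have "complex_of_real (form d (\<lambda>k. Re (w k)) (\<lambda>k. Re (w k)) - form d (\<lambda>k. Im (w k)) (\<lambda>k. Im (w k)))
       + \<i> * complex_of_real (2 * form d (\<lambda>k. Re (w k)) (\<lambda>k. Im (w k))) = 1"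
    by (subst (asm) w, subst (asm) w) (simp only: form_complex_self)
  then show "form d (\<lambda>k. Re (w k)) (\<lambda>k. Re (w k)) - form d (\<lambda>k. Im (w k)) (\<lambda>k. Im (w k)) = 1"
    and "form d (\<lambda>k. Re (w k)) (\<lambda>k. Im (w k)) = 0"
    by (auto simp: complex_eq_iff)
  show "(\<lambda>k. Re (w k)) \<in> vecs d" "(\<lambda>k. Im (w k)) \<in> vecs d"
    using assms by (auto simp: Xdc_def vecs_def)
qed

lemma expi_apply_outside: "d < k \<Longrightarrow> expi_apply d M c k = 0"
  by (simp add: expi_apply_def mapply_def)

lemma Xdc_eq_expi_rep:
  assumes "1 \<le> d" "w \<in> Xdc d" "p \<in> vecs d"
    and admissible: "rep_admissible d p (\<lambda>k. Re (w k)) (\<lambda>k. Im (w k))"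
    and orientation: "0 < Im (w 0) * p d - Im (w d) * p 0"
  shows "rep_gen d p (\<lambda>k. Re (w k)) (\<lambda>k. Im (w k)) \<in> Cplus d"
    and "rep_base d p (\<lambda>k. Re (w k)) (\<lambda>k. Im (w k)) \<in> Xd d"
    and "w = expi_apply d (rep_gen d p (\<lambda>k. Re (w k)) (\<lambda>k. Im (w k)))
                          (rep_base d p (\<lambda>k. Re (w k)) (\<lambda>k. Im (w k)))"
proof -
  let ?x = "\<lambda>k. Re (w k)" and ?y = "\<lambda>k. Im (w k)"
  note parts = Xdc_Re_Im[OF assms(2)]
  interpret rep_data d p ?x ?y
    using assms(1) parts(2) admissible by unfold_locales
  show "rep_gen d p ?x ?y \<in> Cplus d"
    by (rule rep_gen_in_Cplus[OF assms(3) parts(4) orientation])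
  show "rep_base d p ?x ?y \<in> Xd d"
    by (rule rep_base_in_Xd[OF assms(3) parts(3,4,1)])
  show "w = expi_apply d (rep_gen d p ?x ?y) (rep_base d p ?x ?y)"
  proof
    fix k
    show "w k = expi_apply d (rep_gen d p ?x ?y) (rep_base d p ?x ?y) k"
    proof (cases "k \<le> d")
      case True
      then show ?thesis by (simp add: expi_apply_rep complex_eq_iff)
    next
      case False
      then show ?thesis using assms(2) by (simp add: expi_apply_outside Xdc_def vecs_def)
    qed
  qed
qed

lemma rep_neighbourhood:
  fixes z :: "nat \<Rightarrow> complex"
  assumes d: "1 \<le> d" and admissible: "rep_admissible d p x y" and p: "p \<in> vecs d"
    and orientation: "0 < y 0 * p d - y d * p 0"
    and z: "\<And>k. k \<le> d \<Longrightarrow> z k = complex_of_real (x k) + \<i> * complex_of_real (y k)"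
    and M: "matdist d (rep_gen d p x y) L < \<epsilon>" and c: "vdist d (rep_base d p x y) c < \<epsilon>"
  shows "\<exists>\<delta>>0. \<forall>w\<in>Xdc d. vdist d w z < \<delta> \<longrightarrow>
           (\<exists>M\<in>Cplus d. \<exists>c'\<in>Xd d. matdist d M L < \<epsilon> \<and> vdist d c' c < \<epsilon> \<and> w = expi_apply d M c')"
proof -
  define F where "F = filtercomap (\<lambda>w. vdist d w z) (nhds 0)"
  have Re_lim: "((\<lambda>w. Re (w k)) \<longlongrightarrow> x k) F" and Im_lim: "((\<lambda>w. Im (w k)) \<longlongrightarrow> y k) F" if "k \<le> d" for k
    using tendsto_Re[OF vdist_coordinate_tendsto[OF that, where z = z]]
      tendsto_Im[OF vdist_coordinate_tendsto[OF that, where z = z]]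
    by (simp_all add: F_def z[OF that])
  note lims = Re_lim Im_lim
  have "eventually (\<lambda>w. rep_admissible d p (\<lambda>k. Re (w k)) (\<lambda>k. Im (w k))) F"
    by (rule eventually_rep_admissible[OF admissible lims])
  moreover have "((\<lambda>w. Im (w 0) * p d - Im (w d) * p 0) \<longlongrightarrow> y 0 * p d - y d * p 0) F"
    by (intro tendsto_intros Im_lim) auto
  then have "eventually (\<lambda>w. 0 < Im (w 0) * p d - Im (w d) * p 0) F"
    using orientation by (rule order_tendstoD(1))
  moreover have "eventually (\<lambda>w. matdist d (rep_gen d p (\<lambda>k. Re (w k)) (\<lambda>k. Im (w k))) L < \<epsilon>) F"
    using order_tendstoD(2)[OF tendsto_matdist[OF tendsto_rep_gen[OF admissible lims]] M] .
  moreover have "eventually (\<lambda>w. vdist d (rep_base d p (\<lambda>k. Re (w k)) (\<lambda>k. Im (w k))) c < \<epsilon>) F"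
    using order_tendstoD(2)[OF tendsto_vdist[OF tendsto_rep_base[OF admissible lims]] c] .
  ultimately have "eventually (\<lambda>w. w \<in> Xdc d \<longrightarrow>
      (\<exists>M\<in>Cplus d. \<exists>c'\<in>Xd d. matdist d M L < \<epsilon> \<and> vdist d c' c < \<epsilon> \<and> w = expi_apply d M c')) F"
  proof eventually_elim
    case (elim w)
    show ?case
    proof
      assume "w \<in> Xdc d"
      note rep = Xdc_eq_expi_rep[OF d this p elim(1,2)]
      show "\<exists>M\<in>Cplus d. \<exists>c'\<in>Xd d. matdist d M L < \<epsilon> \<and> vdist d c' c < \<epsilon> \<and> w = expi_apply d M c'"
        by (rule bexI[OF bexI[OF _ rep(2)] rep(1)]) (intro conjI elim(3,4) rep(3))
    qed
  qed
  then show ?thesis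
    unfolding F_def by (blast dest: eventually_vdist_imp_ball)
qed

lemma rep_neighbourhood_null_limit:
  fixes z :: "nat \<Rightarrow> complex"
  assumes d2: "2 \<le> d" and Y_pos: "0 < form d y y" and null_y: "form d (null_vec d) y = 0"
    and E_pos: "0 < form d (null_vec d) x" and y0: "0 < y 0"
    and z: "\<And>k. k \<le> d \<Longrightarrow> z k = complex_of_real (x k) + \<i> * complex_of_real (y k)"
    and L: "L = (\<lambda>i j. ell d y (null_vec d) i j / form d (null_vec d) x)"
    and c: "c = (\<lambda>k. x k - form d y y / (2 * form d (null_vec d) x) * null_vec d k)"
    and "0 < \<epsilon>"
  shows "\<exists>\<delta>>0. \<forall>w\<in>Xdc d. vdist d w z < \<delta> \<longrightarrow>
           (\<exists>M\<in>Cplus d. \<exists>c'\<in>Xd d. matdist d M L < \<epsilon> \<and> vdist d c' c < \<epsilon> \<and> w = expi_apply d M c')"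
proof -
  have "eventually (\<lambda>s. 0 < s) (at_right (0::real))"
    by (rule eventually_at_right_less)
  moreover note eventually_tilted_admissible[OF d2 Y_pos null_y E_pos]
  moreover have "eventually (\<lambda>s. matdist d (rep_gen d (tilted_null d s) x y) L < \<epsilon>) (at_right 0)"
    using \<open>0 < \<epsilon>\<close> unfolding L
    by (intro order_tendstoD(2)[OF tendsto_matdist[OF rep_gen_tendsto_null[OF d2 Y_pos null_y E_pos]]])
       (simp add: matdist_def)
  moreover have "eventually (\<lambda>s. vdist d (rep_base d (tilted_null d s) x y) c < \<epsilon>) (at_right 0)"
    using \<open>0 < \<epsilon>\<close> unfolding c
    by (intro order_tendstoD(2)[OF tendsto_vdist[OF rep_base_tendsto_null[OF d2 Y_pos null_y E_pos]]])
       (simp add: vdist_def)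
  ultimately have "eventually (\<lambda>s. 0 < s \<and> rep_admissible d (tilted_null d s) x y
      \<and> matdist d (rep_gen d (tilted_null d s) x y) L < \<epsilon> \<and> vdist d (rep_base d (tilted_null d s) x y) c < \<epsilon>)
      (at_right 0)"
    by eventually_elim blast
  moreover have "at_right (0::real) \<noteq> bot"
    by simp
  ultimately obtain s where s: "0 < s" "rep_admissible d (tilted_null d s) x y"
    "matdist d (rep_gen d (tilted_null d s) x y) L < \<epsilon>" "vdist d (rep_base d (tilted_null d s) x y) c < \<epsilon>"
    using eventually_happens' by blast
  have "0 < y 0 * tilted_null d s d - y d * tilted_null d s 0"
    using d2 y0 \<open>0 < s\<close> by (simp add: tilted_null_def null_vec_def unitv_def)
  then show ?thesis
    using d2 by (intro rep_neighbourhood[OF _ s(2) tilted_null_in_vecs _ z s(3,4)]) simp_all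
qed

lemma null_rotation_neighbourhood:
  assumes d2: "2 \<le> d" and orth: "form d \<beta> (null_vec d) = 0" and B_pos: "0 < form d \<beta> \<beta>"
    and \<beta>0: "0 < \<beta> 0" and c: "c \<in> Xd d" and E_pos: "0 < form d (null_vec d) c"
  shows "expi_apply d (ell d \<beta> (null_vec d)) c \<in> Xdc d"
    and "\<forall>\<epsilon>>0. \<exists>\<delta>>0. \<forall>w\<in>Xdc d. vdist d w (expi_apply d (ell d \<beta> (null_vec d)) c) < \<delta> \<longrightarrow>
           (\<exists>M\<in>Cplus d. \<exists>c'\<in>Xd d. matdist d M (ell d \<beta> (null_vec d)) < \<epsilon> \<and> vdist d c' c < \<epsilon>
              \<and> w = expi_apply d M c')"
proof -
  let ?n = "null_vec d"
  interpret null_rotation d \<beta> ?n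
    using d2 orth by unfold_locales (simp_all add: form_null_vec_self)
  show "expi_apply d (ell d \<beta> ?n) c \<in> Xdc d"
    using c by (intro expi_null_rotation_in_Xdc) (simp add: Xd_def)
  let ?x = "expi_re c" and ?y = "expi_im c"
  have Y_pos: "0 < form d ?y ?y"
    using E_pos B_pos by (simp add: form_expi_im_im)
  have E_x: "0 < form d ?n ?x"
    using E_pos by (simp add: form_null_expi_re)
  have y0: "0 < ?y 0"
    using d2 E_pos \<beta>0 by (simp add: expi_im_def null_vec_first)
  have L: "ell d \<beta> ?n = (\<lambda>i j. ell d ?y ?n i j / form d ?n ?x)"
    using E_pos by (simp add: form_null_expi_re ell_expi_im)
  have c_eq: "c = (\<lambda>k. ?x k - form d ?y ?y / (2 * form d ?n ?x) * ?n k)"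
    unfolding form_null_expi_re form_expi_im_im using E_pos
    by (intro ext) (simp add: expi_re_def power2_eq_square)
  show "\<forall>\<epsilon>>0. \<exists>\<delta>>0. \<forall>w\<in>Xdc d. vdist d w (expi_apply d (ell d \<beta> ?n) c) < \<delta> \<longrightarrow>
           (\<exists>M\<in>Cplus d. \<exists>c'\<in>Xd d. matdist d M (ell d \<beta> ?n) < \<epsilon> \<and> vdist d c' c < \<epsilon>
              \<and> w = expi_apply d M c')"
    using rep_neighbourhood_null_limit[OF d2 Y_pos form_null_expi_im E_x y0 expi_apply_null_rotation L c_eq]
    by blast
qed

lemma Gamma_dd1_null_rotation:
  assumes d2: "2 \<le> d" and "L \<in> Gamma_dd1 d"
  obtains \<beta> where "L = ell d \<beta> (null_vec d)" "form d \<beta> (null_vec d) = 0" "0 < form d \<beta> \<beta>" "0 < \<beta> 0"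
proof -
  from assms(2) obtain b where L: "L = (\<lambda>i j. \<Sum>\<mu>\<in>{0..d-2}. b \<mu> * Lmu d \<mu> i j)"
    and b0: "sqrt (\<Sum>j\<in>{1..d-2}. (b j)^2) < b 0"
    unfolding Gamma_dd1_def by auto
  define S where "S = (\<Sum>j\<in>{1..d-2}. (b j)^2)"
  define \<beta> where "\<beta> = (\<lambda>k. \<Sum>\<mu>\<in>{0..d-2}. b \<mu> * unitv \<mu> k)"
  have "0 \<le> S"
    unfolding S_def by (simp add: sum_nonneg)
  have \<beta>_eq: "\<beta> k = (if k \<le> d - 2 then b k else 0)" for k
  proof -
    have "\<beta> k = (\<Sum>\<mu>\<in>{0..d-2}. if \<mu> = k then b \<mu> else 0)"
      unfolding \<beta>_def by (intro sum.cong) (auto simp: unitv_def)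
    then show ?thesis by simp
  qed
  have "L = ell d \<beta> (null_vec d)"
    unfolding L Lmu_def \<beta>_def null_vec_def[symmetric] by (intro ext) (simp add: ell_sum_left)
  moreover have "form d \<beta> (null_vec d) = 0"
  proof -
    have "\<not> d \<le> d - 2" "\<not> d - 1 \<le> d - 2" using d2 by arith+
    then show ?thesis
      using d2 by (simp add: form_commute[of d \<beta>] form_null_vec \<beta>_eq)
  qed
  moreover have "0 < form d \<beta> \<beta>"
  proof -
    have "(sqrt S)^2 < (b 0)^2"
      using b0 \<open>0 \<le> S\<close> unfolding S_def by (intro power_strict_mono) auto
    moreover have "form d \<beta> \<beta> = (b 0)^2 - S"
    proof -
      have "{1..d-1} = insert (d-1) {1..d-2}" "d - 1 \<notin> {1..d-2}" using d2 by auto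
      moreover have "(\<Sum>j\<in>{1..d-2}. \<beta> j * \<beta> j) = S"
        unfolding S_def by (intro sum.cong) (auto simp: \<beta>_eq power2_eq_square)
      ultimately show ?thesis
        using d2 by (simp add: form_def \<beta>_eq power2_eq_square)
    qed
    ultimately show ?thesis
      using \<open>0 \<le> S\<close> by simp
  qed
  moreover have "0 < \<beta> 0"
  proof -
    have "\<beta> 0 = b 0" by (simp add: \<beta>_eq)
    then show ?thesis
      using b0 real_sqrt_ge_zero[OF \<open>0 \<le> S\<close>] unfolding S_def by linarith
  qed
  ultimately show ?thesis by (rule that)
qed

lemma Mv_D: "2 \<le> d \<Longrightarrow> c \<in> Mv d v \<Longrightarrow> c \<in> Xd d \<and> form d (null_vec d) c = exp v"
  by (simp add: Mv_def form_null_vec add.commute)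

theorem lemma16:
  fixes d :: nat and v :: real and c :: "nat \<Rightarrow> real" and L :: "nat \<Rightarrow> nat \<Rightarrow> real"
  assumes "d \<ge> 2" and "c \<in> Mv d v" and "L \<in> Gamma_dd1 d"
  shows "(\<forall>\<epsilon>>0. \<exists>M\<in>Cplus d. \<exists>c'\<in>Xd d.
            matdist d M L < \<epsilon> \<and> vdist d c' c < \<epsilon> \<and> expi_apply d L c = expi_apply d M c')
       \<and> (\<forall>\<epsilon>>0. \<exists>\<delta>>0. \<forall>z''\<in>Xdc d. vdist d z'' (expi_apply d L c) < \<delta> \<longrightarrow>
            (\<exists>M''\<in>Cplus d. \<exists>c''\<in>Xd d. matdist d M'' L < \<epsilon> \<and> vdist d c'' c < \<epsilon>
                \<and> z'' = expi_apply d M'' c''))"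
proof -
  obtain \<beta> where L: "L = ell d \<beta> (null_vec d)"
    and \<beta>: "form d \<beta> (null_vec d) = 0" "0 < form d \<beta> \<beta>" "0 < \<beta> 0"
    using Gamma_dd1_null_rotation[OF assms(1,3)] by blast
  have c: "c \<in> Xd d" "0 < form d (null_vec d) c"
    using Mv_D[OF assms(1,2)] by simp_all
  note z_in_Xdc = null_rotation_neighbourhood(1)[OF assms(1) \<beta> c, folded L]
  note part_ii = null_rotation_neighbourhood(2)[OF assms(1) \<beta> c, folded L]
  have "vdist d (expi_apply d L c) (expi_apply d L c) = 0"
    by (simp add: vdist_def)
  then have "\<forall>\<epsilon>>0. \<exists>M\<in>Cplus d. \<exists>c'\<in>Xd d.
            matdist d M L < \<epsilon> \<and> vdist d c' c < \<epsilon> \<and> expi_apply d L c = expi_apply d M c'"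
    using part_ii z_in_Xdc by metis
  with part_ii show ?thesis by blast
qed

end
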